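(* Let $n$ be a positive integer, $|r|<1$, and let $\alpha>0$, $\gamma,\delta\in\mathbb{R}$ satisfy $n>\gamma+1$, $n>\delta+1$ and $n>\gamma+\delta-2\alpha+1$. Consider the prior density $\pi_\alpha(\rho)=(1-\rho^2)^{\alpha-1}/\mathcal{B}(\frac12,\alpha)$ on $(-1,1)$ and the reduced likelihood \[ h_{\gamma,\delta}(n,r\mid\rho)=(1-\rho^2)^{\frac{n-\gamma-\delta-1}{2}}\Big[{}_2F_1\big(\tfrac{n-\gamma-1}{2},\tfrac{n-\delta-1}{2};\tfrac12;r^2\rho^2\big)+2r\rho W_{\gamma,\delta}(n)\,{}_2F_1\big(\tfrac{n-\gamma}{2},\tfrac{n-\delta}{2};\tfrac32;r^2\rho^2\big)\Big], \] with $W_{\gamma,\delta}(n)=\frac{\Gamma(\frac{n-\gamma}{2})\Gamma(\frac{n-\delta}{2})}{\Gamma(\frac{n-\gamma-1}{2})\Gamma(\frac{n-\delta-1}{2})}$. Then the posterior density $\pi(\rho\mid n,r)=h_{\gamma,\delta}(n,r\mid\rho)\pi_\alpha(\rho)/p^{\gamma,\delta}_\alpha(n,r)$ equals \[ \pi(\rho\mid n,r)=\frac{(1-\rho^2)^{\frac{2\alpha+n-\gamma-\delta-3}{2}}}{p^{\gamma,\delta}_\alpha(n,r)\,\mathcal{B}(\frac12,\alpha)}\Big[{}_2F_1\big(\tfrac{n-\gamma-1}{2},\tfrac{n-\delta-1}{2};\tfrac12;r^2\rho^2\big)+2r\rho W_{\gamma,\delta}(n)\,{}_2F_1\big(\tfrac{n-\gamma}{2},\tfrac{n-\delta}{2};\tfrac32;r^2\rho^2\big)\Big],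 \] where the normalizing constant $p^{\gamma,\delta}_\alpha(n,r)=\int_{-1}^1h_{\gamma,\delta}(n,r\mid\rho)\pi_\alpha(\rho)\,d\rho$ is \[ p^{\gamma,\delta}_\alpha(n,r)=\mathcal{B}\big(\tfrac12,\alpha+\tfrac{n-\gamma-\delta-1}{2}\big)\,{}_2F_1\big(\tfrac{n-\gamma-1}{2},\tfrac{n-\delta-1}{2};\alpha+\tfrac{n-\gamma-\delta}{2};r^2\big)\Big/\mathcal{B}\big(\tfrac12,\alpha\big). \] Moreover, for $k\in\mathbb{N}$ the $k$th posterior moment $E(\rho^k\mid n,r)=\int_{-1}^1\rho^k\pi(\rho\mid n,r)\,d\rho$ equals, for $k$ even, \[ \frac{\mathcal{B}\big(\tfrac12+\tfrac k2,\alpha+\tfrac{n-\gamma-\delta-1}{2}\big)\,{}_3F_2\big(\tfrac{k+1}{2},\tfrac{n-\gamma-1}{2},\tfrac{n-\delta-1}{2};\tfrac12,\tfrac{k+2\alpha+n-\gamma-\delta}{2};r^2\big)}{\mathcal{B}\big(\tfrac12,\alpha+\tfrac{n-\gamma-\delta-1}{2}\big)\,{}_2F_1\big(\tfrac{n-\gamma-1}{2},\tfrac{n-\delta-1}{2};\tfrac{2\alpha+n-\gamma-\delta}{2};r^2\big)}, \] and, for $k$ odd, \[ 2rW_{\gamma,\delta}(n)\frac{\mathcal{B}\big(\tfrac12+\tfrac{k+1}{2},\alpha+\tfrac{n-\gamma-\delta-1}{2}\big)\,{}_3F_2\big(\tfrac{k+2}{2},\tfrac{n-\gamma}{2},\tfrac{n-\delta}{2};\tfrac32,\tfrac{k+2\alpha+n-\gamma-\delta+1}{2};r^2\big)}{\mathcal{B}\big(\tfrac12,\alpha+\tfrac{n-\gamma-\delta-1}{2}\big)\,{}_2F_1\big(\tfrac{n-\gamma-1}{2},\tfrac{n-\delta-1}{2};\tfrac{2\alpha+n-\gamma-\delta}{2};r^2\big)}.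 \]
   Context: $\mathcal{B}(u,v)=\Gamma(u)\Gamma(v)/\Gamma(u+v)$ is the beta function. ${}_pF_q(a_1,\dots,a_p;b_1,\dots,b_q;z)=\sum_{m\ge0}\frac{(a_1)_m\cdots(a_p)_m}{(b_1)_m\cdots(b_q)_m\,m!}z^m$ is the generalized hypergeometric function, with $(x)_m=\Gamma(x+m)/\Gamma(x)$ the Pochhammer symbol. The function $h_{\gamma,\delta}(n,r\mid\rho)$ is (up to a factor independent of $\rho,r$) the bivariate normal likelihood of $n$ pairs with sample correlation $r$ after integrating the means against a flat prior and the standard deviations against $\sigma_1^{\gamma-1}\sigma_2^{\delta-1}$. *)

theory Defs
  imports "HOL-Analysis.Analysis"
begin

definition hypF :: "real list \<Rightarrow> real list \<Rightarrow> real \<Rightarrow> real" where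
  "hypF as bs z =
     (\<Sum>m. (\<Prod>a\<leftarrow>as. pochhammer a m) / ((\<Prod>b\<leftarrow>bs. pochhammer b m) * fact m) * z ^ m)"

definition Wgd :: "real \<Rightarrow> real \<Rightarrow> nat \<Rightarrow> real" where
  "Wgd \<gamma> \<delta> n = Gamma ((real n - \<gamma>) / 2) * Gamma ((real n - \<delta>) / 2) /
      (Gamma ((real n - \<gamma> - 1) / 2) * Gamma ((real n - \<delta> - 1) / 2))"

definition prior_alpha :: "real \<Rightarrow> real \<Rightarrow> real" where
  "prior_alpha \<alpha> \<rho> = (1 - \<rho>\<^sup>2) powr (\<alpha> - 1) / Beta (1/2) \<alpha>"

definition bracket :: "real \<Rightarrow> real \<Rightarrow> nat \<Rightarrow> real \<Rightarrow> real \<Rightarrow> real" where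
  "bracket \<gamma> \<delta> n r \<rho> =
     hypF [(real n - \<gamma> - 1) / 2, (real n - \<delta> - 1) / 2] [1/2] (r\<^sup>2 * \<rho>\<^sup>2)
     + 2 * r * \<rho> * Wgd \<gamma> \<delta> n *
       hypF [(real n - \<gamma>) / 2, (real n - \<delta>) / 2] [3/2] (r\<^sup>2 * \<rho>\<^sup>2)"

definition hlik :: "real \<Rightarrow> real \<Rightarrow> nat \<Rightarrow> real \<Rightarrow> real \<Rightarrow> real" where
  "hlik \<gamma> \<delta> n r \<rho> = (1 - \<rho>\<^sup>2) powr ((real n - \<gamma> - \<delta> - 1) / 2) * bracket \<gamma> \<delta> n r \<rho>"

definition pnorm :: "real \<Rightarrow> real \<Rightarrow> real \<Rightarrow> nat \<Rightarrow> real \<Rightarrow> real" where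
  "pnorm \<alpha> \<gamma> \<delta> n r = (LINT \<rho>:{-1<..<1}|lborel. hlik \<gamma> \<delta> n r \<rho> * prior_alpha \<alpha> \<rho>)"

definition posterior :: "real \<Rightarrow> real \<Rightarrow> real \<Rightarrow> nat \<Rightarrow> real \<Rightarrow> real \<Rightarrow> real" where
  "posterior \<alpha> \<gamma> \<delta> n r \<rho> = hlik \<gamma> \<delta> n r \<rho> * prior_alpha \<alpha> \<rho> / pnorm \<alpha> \<gamma> \<delta> n r"

definition post_moment :: "real \<Rightarrow> real \<Rightarrow> real \<Rightarrow> nat \<Rightarrow> real \<Rightarrow> nat \<Rightarrow> real" where
  "post_moment \<alpha> \<gamma> \<delta> n r k = (LINT \<rho>:{-1<..<1}|lborel. \<rho> ^ k * posterior \<alpha> \<gamma> \<delta> n r \<rho>)"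

end

theory Submission
  imports Defs "HOL-Real_Asymp.Real_Asymp"
begin

text \<open>Expand both hypergeometric functions in the bracket as power series in \<open>r\<^sup>2\<rho>\<^sup>2\<close>. Against the
  weight \<open>(1 - \<rho>\<^sup>2) powr (A - 1)\<close> on \<open>(-1, 1)\<close>, with \<open>A = \<alpha> + (n - \<gamma> - \<delta> - 1)/2\<close>, an odd
  power of \<open>\<rho>\<close> integrates to zero and \<open>\<rho>\<^bsup>2j\<^esup>\<close> integrates to \<open>B(j + 1/2, A)\<close> (substitute \<open>t = \<rho>\<^sup>2\<close>).
  So each moment picks out exactly one of the two series, and the term-by-term integration
  (legitimate since all coefficients are nonnegative) leaves \<open>\<Sum>\<^sub>m c\<^sub>m r\<^bsup>2m\<^esup> B(x + m, A)\<close>.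
  Since \<open>B(x + m, A) = B(x, A) (x)\<^sub>m / (x + A)\<^sub>m\<close>, this is \<open>B(x, A)\<close> times a hypergeometric series
  with the extra parameter pair \<open>x; x + A\<close>; for \<open>x = 1/2\<close> the pair cancels against the lower
  parameter \<open>1/2\<close>, which yields the normalizing constant.\<close>

lemma Beta_real_pos: "x > 0 \<Longrightarrow> y > 0 \<Longrightarrow> Beta x (y::real) > 0"
  by (simp add: Beta_def Gamma_real_pos)

lemma Beta_add_nat:
  fixes x y :: real
  assumes "x > 0" "y > 0"
  shows "Beta (x + real m) y = Beta x y * pochhammer x m / pochhammer (x + y) m"
proof (induction m)
  case (Suc m)
  have xm: "x + real m > 0" using assms by simp
  then have "x + real m \<notin> \<int>\<^sub>\<le>\<^sub>0" by (auto elim!: nonpos_Ints_cases)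
  then have "(x + real m + y) * Beta (x + real m + 1) y = (x + real m) * Beta (x + real m) y"
    by (rule Beta_plus1_left)
  then have "Beta (x + real (Suc m)) y = (x + real m) * Beta (x + real m) y / (x + real m + y)"
    using xm assms by (simp add: field_simps add_ac)
  then show ?case
    by (simp add: Suc.IH pochhammer_Suc field_simps)
qed simp

definition hyp_coeff :: "real list \<Rightarrow> real list \<Rightarrow> nat \<Rightarrow> real" where
  "hyp_coeff as bs m = (\<Prod>a\<leftarrow>as. pochhammer a m) / ((\<Prod>b\<leftarrow>bs. pochhammer b m) * fact m)"

lemma hypF_altdef: "hypF as bs z = (\<Sum>m. hyp_coeff as bs m * z ^ m)"
  by (simp add: hypF_def hyp_coeff_def)

lemma hyp_coeff_nonneg:
  assumes "\<forall>a\<in>set as. a > 0" and "\<forall>b\<in>set bs. b > 0"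
  shows "hyp_coeff as bs m \<ge> 0"
  using assms unfolding hyp_coeff_def
  by (intro divide_nonneg_nonneg mult_nonneg_nonneg prod_list_nonneg) (auto intro: pochhammer_nonneg)

lemma hyp_coeff_2F1_Suc:
  assumes "c > 0"
  shows "hyp_coeff [a, b] [c] (Suc m)
    = hyp_coeff [a, b] [c] m * ((a + real m) * (b + real m) / ((c + real m) * (real m + 1)))"
proof -
  have "c + real m > 0" "pochhammer c m > 0" using assms by (simp_all add: pochhammer_pos)
  then show ?thesis by (simp add: hyp_coeff_def pochhammer_Suc field_simps)
qed

lemma summable_hypF_2F1:
  fixes a b c z :: real
  assumes "c > 0" and "\<bar>z\<bar> < 1"
  shows "summable (\<lambda>m. hyp_coeff [a, b] [c] m * z ^ m)"
proof -
  define q where "q = (1 + \<bar>z\<bar>) / 2"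
  define R where "R m = \<bar>z\<bar> * \<bar>(a + real m) * (b + real m) / ((c + real m) * (real m + 1))\<bar>" for m
  have "R \<longlonglongrightarrow> \<bar>z\<bar> * \<bar>1\<bar>"
    unfolding R_def by (intro tendsto_intros) real_asymp
  moreover have "\<bar>z\<bar> * \<bar>1\<bar> < q" using assms(2) by (simp add: q_def)
  ultimately have "\<forall>\<^sub>F m in sequentially. R m < q"
    by (rule order_tendstoD(2))
  then obtain N where N: "\<And>m. m \<ge> N \<Longrightarrow> R m < q"
    by (auto simp: eventually_sequentially)
  show ?thesis
  proof (rule summable_ratio_test[where N = N])
    show "q < 1" using assms(2) by (simp add: q_def)
    show "norm (hyp_coeff [a, b] [c] (Suc m) * z ^ Suc m) \<le> q * norm (hyp_coeff [a, b] [c] m * z ^ m)"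
      if "m \<ge> N" for m
    proof -
      have "norm (hyp_coeff [a, b] [c] (Suc m) * z ^ Suc m) = R m * norm (hyp_coeff [a, b] [c] m * z ^ m)"
        unfolding R_def hyp_coeff_2F1_Suc[OF assms(1)] by (simp add: abs_mult)
      also have "\<dots> \<le> q * norm (hyp_coeff [a, b] [c] m * z ^ m)"
        using N[OF that] by (intro mult_right_mono) auto
      finally show ?thesis .
    qed
  qed
qed

lemma hypF_cancel:
  assumes "\<And>m. pochhammer c m \<noteq> 0"
  shows "hypF (c # as) (c # bs) z = hypF as bs z"
proof -
  have "hyp_coeff (c # as) (c # bs) m = hyp_coeff as bs m" for m
    using assms[of m] by (simp add: hyp_coeff_def)
  then show ?thesis by (simp add: hypF_altdef)
qed

lemma hyp_coeff_Cons_append: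
  "hyp_coeff (x # as) (bs @ [y]) m = hyp_coeff as bs m * pochhammer x m / pochhammer y m"
  by (simp add: hyp_coeff_def mult_ac)

lemma suminf_Beta_weighted_hypF:
  fixes x A z :: real
  assumes x: "x > 0" and A: "A > 0"
    and summable: "summable (\<lambda>m. hyp_coeff as bs m * z ^ m * Beta (x + real m) A)"
  shows "(\<Sum>m. hyp_coeff as bs m * z ^ m * Beta (x + real m) A) = Beta x A * hypF (x # as) (bs @ [x + A]) z"
proof -
  have term_eq: "hyp_coeff as bs m * z ^ m * Beta (x + real m) A
      = Beta x A * (hyp_coeff (x # as) (bs @ [x + A]) m * z ^ m)" for m
    by (simp add: Beta_add_nat[OF x A] hyp_coeff_Cons_append)
  have "summable (\<lambda>m. hyp_coeff (x # as) (bs @ [x + A]) m * z ^ m)"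
    using summable unfolding term_eq
    by (rule summable_mult_D) (use Beta_real_pos[OF x A] in simp)
  then show ?thesis
    unfolding term_eq hypF_altdef by (rule suminf_mult)
qed

lemma nn_integral_Beta_square_substitution:
  fixes a b :: real
  assumes a: "a > 0" and b: "b > 0"
  shows "(\<integral>\<^sup>+x. ennreal (2 * (indicator {0..1} x * x powr (2 * a - 1) * (1 - x\<^sup>2) powr (b - 1))) \<partial>lborel)
    = ennreal (Beta a b)"
proof -
  define f where "f t = t powr (a - 1) * (1 - t) powr (b - 1)" for t :: real
  have "ennreal (Beta a b) = (\<integral>\<^sup>+t. indicator {0..1} t * f t \<partial>lborel)"
    unfolding f_def using has_integral_Beta_real[OF a b]
    by (intro nn_integral_has_integral_lebesgue[symmetric]) auto
  also have "\<dots> = (\<integral>\<^sup>+t. f t * indicator {0\<^sup>2..1\<^sup>2} t \<partial>lborel)"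
    by (intro nn_integral_cong) (simp add: mult.commute)
  also have "\<dots> = (\<integral>\<^sup>+x. f (x\<^sup>2) * (2 * x) * indicator {0..1} x \<partial>lborel)"
    by (rule nn_integral_substitution)
      (auto simp: set_borel_measurable_def f_def intro!: derivative_eq_intros continuous_intros)
  also have "\<dots> = (\<integral>\<^sup>+x. ennreal (2 * (indicator {0..1} x * x powr (2 * a - 1) * (1 - x\<^sup>2) powr (b - 1))) \<partial>lborel)"
  proof (intro nn_integral_cong arg_cong[where f = ennreal])
    fix x :: real
    have "(x\<^sup>2) powr (a - 1) * x = x powr (2 * a - 1)" if "x > 0"
    proof -
      have "(x\<^sup>2) powr (a - 1) = (x powr 2) powr (a - 1)"
        using that by simp
      also have "\<dots> = x powr (2 * (a - 1))"
        by (rule powr_powr)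
      also have "\<dots> * x = x powr (2 * (a - 1) + 1)"
        using that by (subst powr_add) simp
      also have "2 * (a - 1) + 1 = 2 * a - 1"
        by simp
      finally show ?thesis by simp
    qed
    \<comment> \<open>at \<open>x = 0\<close> both sides vanish, as \<open>0 powr _ = 0\<close>\<close>
    then show "f (x\<^sup>2) * (2 * x) * indicator {0..1} x
        = 2 * (indicator {0..1} x * x powr (2 * a - 1) * (1 - x\<^sup>2) powr (b - 1))"
      by (cases "x = 0") (auto simp: f_def indicator_def)
  qed
  finally show ?thesis ..
qed

lemma nn_integral_even_power_Beta:
  fixes A :: real and k :: nat
  assumes A: "A > 0"
  shows "(\<integral>\<^sup>+x. ennreal (indicator {-1<..<1} x * x ^ (2 * k) * (1 - x\<^sup>2) powr (A - 1)) \<partial>lborel)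
    = ennreal (Beta (real k + 1/2) A)"
proof -
  define G where "G x = indicator {0..1} x * x powr (2 * real k) * (1 - x\<^sup>2) powr (A - 1)" for x :: real
  have G_nonneg: "G x \<ge> 0" for x
    by (simp add: G_def)
  have G_measurable [measurable]: "G \<in> borel_measurable borel"
    unfolding G_def by measurable
  \<comment> \<open>\<open>x = 0\<close> must be excluded: \<open>0 ^ 0 = 1\<close> but \<open>0 powr 0 = 0\<close>\<close>
  have "AE x in lborel. x \<noteq> -1 \<and> x \<noteq> 0 \<and> x \<noteq> 1"
    using AE_lborel_singleton[of "-1"] AE_lborel_singleton[of 0] AE_lborel_singleton[of 1]
    by eventually_elim auto
  then have "AE x in lborel.
      ennreal (indicator {-1<..<1} x * x ^ (2 * k) * (1 - x\<^sup>2) powr (A - 1)) = ennreal (G x) + ennreal (G (-x))"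
  proof eventually_elim
    case (elim x)
    have even_powr: "y powr (2 * real k) = x ^ (2 * k)" if "y > 0" "y\<^sup>2 = x\<^sup>2" for y
      using powr_realpow[OF \<open>y > 0\<close>, of "2 * k"] that(2) by (simp add: power_mult)
    consider "x > 0" | "x < 0" using elim by linarith
    then have "indicator {-1<..<1} x * x ^ (2 * k) * (1 - x\<^sup>2) powr (A - 1) = G x + G (-x)"
      by cases (use elim in \<open>auto simp: G_def indicator_def even_powr\<close>)
    then show ?case
      using G_nonneg by (simp add: ennreal_plus)
  qed
  then have "(\<integral>\<^sup>+x. ennreal (indicator {-1<..<1} x * x ^ (2 * k) * (1 - x\<^sup>2) powr (A - 1)) \<partial>lborel)
      = (\<integral>\<^sup>+x. ennreal (G x) \<partial>lborel) + (\<integral>\<^sup>+x. ennreal (G (-x)) \<partial>lborel)"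
    by (simp add: nn_integral_cong_AE nn_integral_add)
  also have "(\<integral>\<^sup>+x. ennreal (G (-x)) \<partial>lborel) = (\<integral>\<^sup>+x. ennreal (G x) \<partial>lborel)"
    using nn_integral_real_affine[of "\<lambda>x. ennreal (G x)" "-1" 0] by simp
  also have "(\<integral>\<^sup>+x. ennreal (G x) \<partial>lborel) + (\<integral>\<^sup>+x. ennreal (G x) \<partial>lborel)
      = (\<integral>\<^sup>+x. ennreal (2 * G x) \<partial>lborel)"
    using G_nonneg by (simp add: nn_integral_add[symmetric] ennreal_plus[symmetric])
  also have "\<dots> = ennreal (Beta (real k + 1/2) A)"
    using nn_integral_Beta_square_substitution[of "real k + 1/2" A] A by (simp add: G_def)
  finally show ?thesis .
qed

lemma set_integral_even_power_Beta:
  fixes A :: real and k :: nat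
  assumes A: "A > 0"
  shows "set_integrable lborel {-1<..<1} (\<lambda>x. x ^ (2 * k) * (1 - x\<^sup>2) powr (A - 1))"
    and "(LINT x:{-1<..<1}|lborel. x ^ (2 * k) * (1 - x\<^sup>2) powr (A - 1)) = Beta (real k + 1/2) A"
proof -
  have "integrable lborel (\<lambda>x. indicator {-1<..<1} x * x ^ (2 * k) * (1 - x\<^sup>2) powr (A - 1))
     \<and> (LINT x|lborel. indicator {-1<..<1} x * x ^ (2 * k) * (1 - x\<^sup>2) powr (A - 1)) = Beta (real k + 1/2) A"
    using nn_integral_even_power_Beta[OF A, of k] Beta_real_pos[of "real k + 1/2" A] A
    by (subst nn_integral_eq_integrable[symmetric]) (auto simp: power_mult)
  then show "set_integrable lborel {-1<..<1} (\<lambda>x. x ^ (2 * k) * (1 - x\<^sup>2) powr (A - 1))"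
    and "(LINT x:{-1<..<1}|lborel. x ^ (2 * k) * (1 - x\<^sup>2) powr (A - 1)) = Beta (real k + 1/2) A"
    by (simp_all add: set_integrable_def set_lebesgue_integral_def mult.assoc)
qed

lemma summable_power_series_square:
  fixes c :: "nat \<Rightarrow> real"
  assumes "\<And>m. c m \<ge> 0" and "z \<ge> 0" and "summable (\<lambda>m. c m * z ^ m)" and "\<bar>x\<bar> \<le> 1"
  shows "summable (\<lambda>m. c m * (z * x\<^sup>2) ^ m)"
proof (rule summable_comparison_test'[OF assms(3)])
  fix m
  have "(x\<^sup>2) ^ m \<le> 1"
    using assms(4) by (simp add: power_le_one abs_square_le_1)
  then show "norm (c m * (z * x\<^sup>2) ^ m) \<le> c m * z ^ m"
    using assms(1,2) by (simp add: abs_mult power_mult_distrib mult_left_le mult_left_mono)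
qed

lemma summable_Beta_weighted:
  fixes c :: "nat \<Rightarrow> real"
  assumes c: "\<And>m. c m \<ge> 0" and z: "z \<ge> 0" and summable: "summable (\<lambda>m. c m * z ^ m)" and A: "A > 0"
  shows "summable (\<lambda>m. c m * z ^ m * Beta (real (j + m) + 1/2) A)"
proof (rule summable_comparison_test')
  show "summable (\<lambda>m. Beta (1/2) A * (c m * z ^ m))"
    using summable by (rule summable_mult)
  show "norm (c m * z ^ m * Beta (real (j + m) + 1/2) A) \<le> Beta (1/2) A * (c m * z ^ m)" for m
    using Beta_real_mono[of "1/2" "real (j + m) + 1/2" A A] Beta_real_pos[of "real (j + m) + 1/2" A] c[of m] z A
    by (simp add: abs_mult mult.commute mult_left_mono)
qed

lemma set_integral_even_power_series:
  fixes c :: "nat \<Rightarrow> real" and z A :: real and j :: nat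
  assumes c: "\<And>m. c m \<ge> 0" and z: "z \<ge> 0" and summable: "summable (\<lambda>m. c m * z ^ m)" and A: "A > 0"
  shows "set_integrable lborel {-1<..<1}
      (\<lambda>x. x ^ (2 * j) * (1 - x\<^sup>2) powr (A - 1) * (\<Sum>m. c m * (z * x\<^sup>2) ^ m))"
    and "(LINT x:{-1<..<1}|lborel. x ^ (2 * j) * (1 - x\<^sup>2) powr (A - 1) * (\<Sum>m. c m * (z * x\<^sup>2) ^ m))
      = (\<Sum>m. c m * z ^ m * Beta (real (j + m) + 1/2) A)"
proof -
  define w where "w x = (1 - x\<^sup>2) powr (A - 1)" for x :: real
  define f where "f m x = indicator {-1<..<1} x * (c m * z ^ m) * (x ^ (2 * (j + m)) * w x)" for m x
  have f_alt: "f m x = indicator {-1<..<1} x * (x ^ (2 * j) * w x) * (c m * (z * x\<^sup>2) ^ m)" for m x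
  proof -
    have "x ^ (2 * (j + m)) = x ^ (2 * j) * (x\<^sup>2) ^ m"
      by (simp add: power_add power_mult)
    then show ?thesis
      by (simp add: f_def power_mult_distrib mult_ac)
  qed
  have f_nonneg: "f m x \<ge> 0" for m x
    unfolding f_def w_def power_mult using c[of m] z by (intro mult_nonneg_nonneg) auto
  have integrable_f: "integrable lborel (f m)"
    and integral_f: "integral\<^sup>L lborel (f m) = c m * z ^ m * Beta (real (j + m) + 1/2) A" for m
  proof -
    have "f m = (\<lambda>x. (c m * z ^ m) * (indicator {-1<..<1} x * (x ^ (2 * (j + m)) * w x)))"
      by (simp add: fun_eq_iff f_def mult_ac)
    then show "integrable lborel (f m)"
      and "integral\<^sup>L lborel (f m) = c m * z ^ m * Beta (real (j + m) + 1/2) A"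
      using set_integral_even_power_Beta[OF A, of "j + m"]
      by (simp_all add: w_def set_integrable_def set_lebesgue_integral_def)
  qed
  have summable_pointwise: "AE x in lborel. summable (\<lambda>m. norm (f m x))"
  proof (rule AE_I2)
    fix x :: real
    show "summable (\<lambda>m. norm (f m x))"
    proof (cases "x \<in> {-1<..<1}")
      case True
      then have "summable (\<lambda>m. f m x)"
        unfolding f_alt by (intro summable_mult summable_power_series_square[OF c z summable]) auto
      then show ?thesis
        using f_nonneg by simp
    qed (simp add: f_def)
  qed
  have summable_integrals: "summable (\<lambda>m. LINT x|lborel. norm (f m x))"
    using summable_Beta_weighted[OF c z summable A, of j] f_nonneg by (simp add: integral_f)
  have suminf_f: "(\<lambda>x. \<Sum>m. f m x)
      = (\<lambda>x. indicator {-1<..<1} x * (x ^ (2 * j) * (1 - x\<^sup>2) powr (A - 1) * (\<Sum>m. c m * (z * x\<^sup>2) ^ m)))"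
  proof
    fix x :: real
    show "(\<Sum>m. f m x)
      = indicator {-1<..<1} x * (x ^ (2 * j) * (1 - x\<^sup>2) powr (A - 1) * (\<Sum>m. c m * (z * x\<^sup>2) ^ m))"
    proof (cases "x \<in> {-1<..<1}")
      case True
      then have "summable (\<lambda>m. c m * (z * x\<^sup>2) ^ m)"
        by (intro summable_power_series_square[OF c z summable]) auto
      then show ?thesis
        using True by (simp add: f_alt w_def suminf_mult)
    qed (simp add: f_def)
  qed
  show "set_integrable lborel {-1<..<1}
      (\<lambda>x. x ^ (2 * j) * (1 - x\<^sup>2) powr (A - 1) * (\<Sum>m. c m * (z * x\<^sup>2) ^ m))"
    using integrable_suminf[OF integrable_f summable_pointwise summable_integrals]
    by (simp add: set_integrable_def suminf_f)
  show "(LINT x:{-1<..<1}|lborel. x ^ (2 * j) * (1 - x\<^sup>2) powr (A - 1) * (\<Sum>m. c m * (z * x\<^sup>2) ^ m))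
      = (\<Sum>m. c m * z ^ m * Beta (real (j + m) + 1/2) A)"
    using integral_suminf[OF integrable_f summable_pointwise summable_integrals]
    by (simp add: set_lebesgue_integral_def suminf_f integral_f)
qed

lemma set_integral_odd_eq_0:
  fixes f :: "real \<Rightarrow> real"
  assumes odd: "\<And>x. f (-x) = - f x" and symmetric: "\<And>x. -x \<in> S \<longleftrightarrow> x \<in> S"
  shows "(LINT x:S|lborel. f x) = 0"
proof -
  define g where "g x = indicator S x * f x" for x
  have "g (-x) = - g x" for x
    using odd symmetric[of x] by (simp add: g_def indicator_def)
  then have "integral\<^sup>L lborel g = - integral\<^sup>L lborel g"
    using lborel_integral_real_affine[of "-1" g 0] by simp
  then show ?thesis
    by (simp add: set_lebesgue_integral_def g_def[abs_def])
qed

lemma set_integral_odd_power_series: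
  fixes c :: "nat \<Rightarrow> real" and z A :: real and j :: nat
  assumes c: "\<And>m. c m \<ge> 0" and z: "z \<ge> 0" and summable: "summable (\<lambda>m. c m * z ^ m)" and A: "A > 0"
  shows "set_integrable lborel {-1<..<1}
      (\<lambda>x. x ^ (2 * j + 1) * (1 - x\<^sup>2) powr (A - 1) * (\<Sum>m. c m * (z * x\<^sup>2) ^ m))"
    and "(LINT x:{-1<..<1}|lborel. x ^ (2 * j + 1) * (1 - x\<^sup>2) powr (A - 1) * (\<Sum>m. c m * (z * x\<^sup>2) ^ m)) = 0"
proof -
  define g where "g x = x ^ (2 * j) * (1 - x\<^sup>2) powr (A - 1) * (\<Sum>m. c m * (z * x\<^sup>2) ^ m)" for x :: real
  have odd_eq: "x ^ (2 * j + 1) * (1 - x\<^sup>2) powr (A - 1) * (\<Sum>m. c m * (z * x\<^sup>2) ^ m) = x * g x" for x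
    by (simp add: g_def)
  have g_integrable: "set_integrable lborel {-1<..<1} g"
    unfolding g_def by (rule set_integral_even_power_series(1)[OF c z summable A])
  then have "(\<lambda>x. indicator {-1<..<1} x * g x) \<in> borel_measurable lborel"
    unfolding set_integrable_def by (simp add: borel_measurable_integrable)
  then have "set_borel_measurable lborel {-1<..<1} (\<lambda>x. x * g x)"
    unfolding set_borel_measurable_def by (simp add: mult_ac)
  then show "set_integrable lborel {-1<..<1}
      (\<lambda>x. x ^ (2 * j + 1) * (1 - x\<^sup>2) powr (A - 1) * (\<Sum>m. c m * (z * x\<^sup>2) ^ m))"
    unfolding odd_eq
    by (rule set_integrable_bound[OF g_integrable])
      (auto simp: abs_mult intro!: mult_left_le_one_le)
  show "(LINT x:{-1<..<1}|lborel. x ^ (2 * j + 1) * (1 - x\<^sup>2) powr (A - 1) * (\<Sum>m. c m * (z * x\<^sup>2) ^ m)) = 0"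
    by (rule set_integral_odd_eq_0) auto
qed

lemma set_integral_even_moment_hypF:
  fixes z A :: real and j :: nat
  assumes as: "\<forall>a\<in>set as. a > 0" and bs: "\<forall>b\<in>set bs. b > 0" and z: "z \<ge> 0"
    and summable: "summable (\<lambda>m. hyp_coeff as bs m * z ^ m)" and A: "A > 0"
  shows "set_integrable lborel {-1<..<1} (\<lambda>x. x ^ (2 * j) * (1 - x\<^sup>2) powr (A - 1) * hypF as bs (z * x\<^sup>2))"
    and "(LINT x:{-1<..<1}|lborel. x ^ (2 * j) * (1 - x\<^sup>2) powr (A - 1) * hypF as bs (z * x\<^sup>2))
      = Beta (real j + 1/2) A * hypF ((real j + 1/2) # as) (bs @ [real j + 1/2 + A]) z"
proof -
  have c: "hyp_coeff as bs m \<ge> 0" for m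
    using as bs by (rule hyp_coeff_nonneg)
  have Beta_index: "real (j + m) + 1/2 = (real j + 1/2) + real m" for m
    by simp
  show "set_integrable lborel {-1<..<1} (\<lambda>x. x ^ (2 * j) * (1 - x\<^sup>2) powr (A - 1) * hypF as bs (z * x\<^sup>2))"
    unfolding hypF_altdef by (rule set_integral_even_power_series(1)[OF c z summable A])
  have "(LINT x:{-1<..<1}|lborel. x ^ (2 * j) * (1 - x\<^sup>2) powr (A - 1) * hypF as bs (z * x\<^sup>2))
      = (\<Sum>m. hyp_coeff as bs m * z ^ m * Beta ((real j + 1/2) + real m) A)"
    using set_integral_even_power_series(2)[OF c z summable A, of j]
    unfolding hypF_altdef Beta_index .
  also have "\<dots> = Beta (real j + 1/2) A * hypF ((real j + 1/2) # as) (bs @ [real j + 1/2 + A]) z"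
    using summable_Beta_weighted[OF c z summable A, of j] A
    unfolding Beta_index by (intro suminf_Beta_weighted_hypF) auto
  finally show "(LINT x:{-1<..<1}|lborel. x ^ (2 * j) * (1 - x\<^sup>2) powr (A - 1) * hypF as bs (z * x\<^sup>2))
      = Beta (real j + 1/2) A * hypF ((real j + 1/2) # as) (bs @ [real j + 1/2 + A]) z" .
qed

lemma set_integral_odd_moment_hypF:
  fixes z A :: real and j :: nat
  assumes as: "\<forall>a\<in>set as. a > 0" and bs: "\<forall>b\<in>set bs. b > 0" and z: "z \<ge> 0"
    and summable: "summable (\<lambda>m. hyp_coeff as bs m * z ^ m)" and A: "A > 0"
  shows "set_integrable lborel {-1<..<1} (\<lambda>x. x ^ (2 * j + 1) * (1 - x\<^sup>2) powr (A - 1) * hypF as bs (z * x\<^sup>2))"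
    and "(LINT x:{-1<..<1}|lborel. x ^ (2 * j + 1) * (1 - x\<^sup>2) powr (A - 1) * hypF as bs (z * x\<^sup>2)) = 0"
  using set_integral_odd_power_series[OF hyp_coeff_nonneg[OF as bs] z summable A, of j]
  unfolding hypF_altdef by auto

lemma set_integrable_moment_hypF:
  fixes z A :: real and k :: nat
  assumes "\<forall>a\<in>set as. a > 0" and "\<forall>b\<in>set bs. b > 0" and "z \<ge> 0"
    and "summable (\<lambda>m. hyp_coeff as bs m * z ^ m)" and "A > 0"
  shows "set_integrable lborel {-1<..<1} (\<lambda>x. x ^ k * (1 - x\<^sup>2) powr (A - 1) * hypF as bs (z * x\<^sup>2))"
proof (cases "even k")
  case True
  then obtain j where "k = 2 * j" by (auto elim: evenE)
  then show ?thesis using set_integral_even_moment_hypF(1)[OF assms] by simp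
next
  case False
  then obtain j where "k = 2 * j + 1" by (auto elim: oddE)
  then show ?thesis using set_integral_odd_moment_hypF(1)[OF assms] by simp
qed

lemma set_integral_moment_hypF_pair:
  fixes z A t :: real and k :: nat
  assumes "\<forall>a\<in>set as\<^sub>1. a > 0" and "\<forall>b\<in>set bs\<^sub>1. b > 0"
    and "summable (\<lambda>m. hyp_coeff as\<^sub>1 bs\<^sub>1 m * z ^ m)"
    and "\<forall>a\<in>set as\<^sub>2. a > 0" and "\<forall>b\<in>set bs\<^sub>2. b > 0"
    and "summable (\<lambda>m. hyp_coeff as\<^sub>2 bs\<^sub>2 m * z ^ m)"
    and "z \<ge> 0" and "A > 0"
  shows "(LINT x:{-1<..<1}|lborel.
      x ^ k * ((1 - x\<^sup>2) powr (A - 1) * (hypF as\<^sub>1 bs\<^sub>1 (z * x\<^sup>2) + t * x * hypF as\<^sub>2 bs\<^sub>2 (z * x\<^sup>2))))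
    = (LINT x:{-1<..<1}|lborel. x ^ k * (1 - x\<^sup>2) powr (A - 1) * hypF as\<^sub>1 bs\<^sub>1 (z * x\<^sup>2))
      + t * (LINT x:{-1<..<1}|lborel. x ^ Suc k * (1 - x\<^sup>2) powr (A - 1) * hypF as\<^sub>2 bs\<^sub>2 (z * x\<^sup>2))"
proof -
  have "(LINT x:{-1<..<1}|lborel.
      x ^ k * ((1 - x\<^sup>2) powr (A - 1) * (hypF as\<^sub>1 bs\<^sub>1 (z * x\<^sup>2) + t * x * hypF as\<^sub>2 bs\<^sub>2 (z * x\<^sup>2))))
    = (LINT x:{-1<..<1}|lborel. x ^ k * (1 - x\<^sup>2) powr (A - 1) * hypF as\<^sub>1 bs\<^sub>1 (z * x\<^sup>2)
      + t * (x ^ Suc k * (1 - x\<^sup>2) powr (A - 1) * hypF as\<^sub>2 bs\<^sub>2 (z * x\<^sup>2)))"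
    by (simp add: algebra_simps)
  also have "\<dots> = (LINT x:{-1<..<1}|lborel. x ^ k * (1 - x\<^sup>2) powr (A - 1) * hypF as\<^sub>1 bs\<^sub>1 (z * x\<^sup>2))
      + t * (LINT x:{-1<..<1}|lborel. x ^ Suc k * (1 - x\<^sup>2) powr (A - 1) * hypF as\<^sub>2 bs\<^sub>2 (z * x\<^sup>2))"
    using set_integrable_moment_hypF[OF assms(1,2,7,3,8), of k]
      set_integrable_moment_hypF[OF assms(4,5,7,6,8), of "Suc k"]
    by (simp add: set_integral_add)
  finally show ?thesis .
qed

lemma hlik_times_prior_alpha:
  "hlik \<gamma> \<delta> n r \<rho> * prior_alpha \<alpha> \<rho>
    = (1 - \<rho>\<^sup>2) powr (\<alpha> + (real n - \<gamma> - \<delta> - 1) / 2 - 1) * bracket \<gamma> \<delta> n r \<rho> / Beta (1/2) \<alpha>"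
proof -
  have exponent: "(1 - \<rho>\<^sup>2) powr ((real n - \<gamma> - \<delta> - 1) / 2) * (1 - \<rho>\<^sup>2) powr (\<alpha> - 1)
      = (1 - \<rho>\<^sup>2) powr (\<alpha> + (real n - \<gamma> - \<delta> - 1) / 2 - 1)"
    unfolding powr_add[symmetric] by (rule arg_cong[where f = "\<lambda>e. (1 - \<rho>\<^sup>2) powr e"]) simp
  have "hlik \<gamma> \<delta> n r \<rho> * prior_alpha \<alpha> \<rho>
      = (1 - \<rho>\<^sup>2) powr ((real n - \<gamma> - \<delta> - 1) / 2) * (1 - \<rho>\<^sup>2) powr (\<alpha> - 1)
        * bracket \<gamma> \<delta> n r \<rho> / Beta (1/2) \<alpha>"
    by (simp add: hlik_def prior_alpha_def)
  then show ?thesis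
    unfolding exponent .
qed

lemma posterior_closed_form:
  "posterior \<alpha> \<gamma> \<delta> n r \<rho> =
     (1 - \<rho>\<^sup>2) powr ((2 * \<alpha> + real n - \<gamma> - \<delta> - 3) / 2) /
     (pnorm \<alpha> \<gamma> \<delta> n r * Beta (1/2) \<alpha>) *
     (hypF [(real n - \<gamma> - 1) / 2, (real n - \<delta> - 1) / 2] [1/2] (r\<^sup>2 * \<rho>\<^sup>2)
      + 2 * r * \<rho> * Wgd \<gamma> \<delta> n *
        hypF [(real n - \<gamma>) / 2, (real n - \<delta>) / 2] [3/2] (r\<^sup>2 * \<rho>\<^sup>2))"
proof -
  have exponent: "\<alpha> + (real n - \<gamma> - \<delta> - 1) / 2 - 1 = (2 * \<alpha> + real n - \<gamma> - \<delta> - 3) / 2"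
    by (simp add: field_simps)
  show ?thesis
    unfolding posterior_def hlik_times_prior_alpha bracket_def exponent by (simp add: mult.commute)
qed

lemma post_moment_eq:
  "post_moment \<alpha> \<gamma> \<delta> n r k
    = (LINT \<rho>:{-1<..<1}|lborel. \<rho> ^ k * (hlik \<gamma> \<delta> n r \<rho> * prior_alpha \<alpha> \<rho>)) / pnorm \<alpha> \<gamma> \<delta> n r"
proof -
  have "(\<lambda>\<rho>. \<rho> ^ k * posterior \<alpha> \<gamma> \<delta> n r \<rho>)
      = (\<lambda>\<rho>. inverse (pnorm \<alpha> \<gamma> \<delta> n r) * (\<rho> ^ k * (hlik \<gamma> \<delta> n r \<rho> * prior_alpha \<alpha> \<rho>)))"
    by (simp add: fun_eq_iff posterior_def divide_inverse mult_ac)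
  then show ?thesis
    by (simp add: post_moment_def divide_inverse mult.commute)
qed

context
  fixes n :: nat and r \<alpha> \<gamma> \<delta> :: real
  assumes r: "\<bar>r\<bar> < 1" and \<alpha>: "\<alpha> > 0"
    and \<gamma>: "real n > \<gamma> + 1" and \<delta>: "real n > \<delta> + 1" and \<gamma>\<delta>: "real n > \<gamma> + \<delta> - 2 * \<alpha> + 1"
begin

lemma moment_integral_split:
  "(LINT \<rho>:{-1<..<1}|lborel. \<rho> ^ k * (hlik \<gamma> \<delta> n r \<rho> * prior_alpha \<alpha> \<rho>))
    = ((LINT \<rho>:{-1<..<1}|lborel. \<rho> ^ k * (1 - \<rho>\<^sup>2) powr (\<alpha> + (real n - \<gamma> - \<delta> - 1) / 2 - 1)
          * hypF [(real n - \<gamma> - 1) / 2, (real n - \<delta> - 1) / 2] [1/2] (r\<^sup>2 * \<rho>\<^sup>2))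
       + 2 * r * Wgd \<gamma> \<delta> n * (LINT \<rho>:{-1<..<1}|lborel. \<rho> ^ Suc k * (1 - \<rho>\<^sup>2) powr (\<alpha> + (real n - \<gamma> - \<delta> - 1) / 2 - 1)
          * hypF [(real n - \<gamma>) / 2, (real n - \<delta>) / 2] [3/2] (r\<^sup>2 * \<rho>\<^sup>2)))
      / Beta (1/2) \<alpha>"
proof -
  define A where "A = \<alpha> + (real n - \<gamma> - \<delta> - 1) / 2"
  define F\<^sub>1 where "F\<^sub>1 = hypF [(real n - \<gamma> - 1) / 2, (real n - \<delta> - 1) / 2] [1/2]"
  define F\<^sub>2 where "F\<^sub>2 = hypF [(real n - \<gamma>) / 2, (real n - \<delta>) / 2] [3/2]"
  have A: "A > 0"
    using \<gamma>\<delta> by (simp add: A_def field_simps)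
  have r2: "\<bar>r\<^sup>2\<bar> < 1" "r\<^sup>2 \<ge> 0"
    using r by (simp_all add: abs_square_less_1)
  have integrand: "\<rho> ^ k * (hlik \<gamma> \<delta> n r \<rho> * prior_alpha \<alpha> \<rho>)
      = \<rho> ^ k * ((1 - \<rho>\<^sup>2) powr (A - 1)
          * (F\<^sub>1 (r\<^sup>2 * \<rho>\<^sup>2) + (2 * r * Wgd \<gamma> \<delta> n) * \<rho> * F\<^sub>2 (r\<^sup>2 * \<rho>\<^sup>2))) / Beta (1/2) \<alpha>" for \<rho>
    unfolding hlik_times_prior_alpha bracket_def A_def F\<^sub>1_def F\<^sub>2_def by (simp add: mult_ac)
  have "(LINT \<rho>:{-1<..<1}|lborel. \<rho> ^ k * (hlik \<gamma> \<delta> n r \<rho> * prior_alpha \<alpha> \<rho>))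
    = ((LINT \<rho>:{-1<..<1}|lborel. \<rho> ^ k * (1 - \<rho>\<^sup>2) powr (A - 1) * F\<^sub>1 (r\<^sup>2 * \<rho>\<^sup>2))
       + 2 * r * Wgd \<gamma> \<delta> n * (LINT \<rho>:{-1<..<1}|lborel. \<rho> ^ Suc k * (1 - \<rho>\<^sup>2) powr (A - 1) * F\<^sub>2 (r\<^sup>2 * \<rho>\<^sup>2)))
      / Beta (1/2) \<alpha>"
    unfolding integrand set_integral_divide_zero F\<^sub>1_def F\<^sub>2_def
    using \<gamma> \<delta> r2 A
    by (subst set_integral_moment_hypF_pair) (auto intro!: summable_hypF_2F1)
  then show ?thesis
    by (simp only: A_def F\<^sub>1_def F\<^sub>2_def)
qed

lemma likelihood_parameters_pos:
  "\<forall>a\<in>set [(real n - \<gamma> - 1) / 2, (real n - \<delta> - 1) / 2]. a > 0"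
  "\<forall>a\<in>set [(real n - \<gamma>) / 2, (real n - \<delta>) / 2]. a > 0"
  "\<alpha> + (real n - \<gamma> - \<delta> - 1) / 2 > 0"
  using \<gamma> \<delta> \<gamma>\<delta> by (auto simp: field_simps)

lemma likelihood_series_summable:
  "summable (\<lambda>m. hyp_coeff [(real n - \<gamma> - 1) / 2, (real n - \<delta> - 1) / 2] [1/2] m * (r\<^sup>2) ^ m)"
  "summable (\<lambda>m. hyp_coeff [(real n - \<gamma>) / 2, (real n - \<delta>) / 2] [3/2] m * (r\<^sup>2) ^ m)"
  using r by (simp_all add: summable_hypF_2F1 abs_square_less_1)

lemma moment_integral_even:
  "(LINT \<rho>:{-1<..<1}|lborel. \<rho> ^ (2 * j) * (hlik \<gamma> \<delta> n r \<rho> * prior_alpha \<alpha> \<rho>))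
    = Beta (real j + 1/2) (\<alpha> + (real n - \<gamma> - \<delta> - 1) / 2)
      * hypF [real j + 1/2, (real n - \<gamma> - 1) / 2, (real n - \<delta> - 1) / 2]
          [1/2, real j + 1/2 + (\<alpha> + (real n - \<gamma> - \<delta> - 1) / 2)] (r\<^sup>2)
      / Beta (1/2) \<alpha>"
  using set_integral_even_moment_hypF(2)[OF likelihood_parameters_pos(1) _ _ likelihood_series_summable(1)
      likelihood_parameters_pos(3), of j]
    set_integral_odd_moment_hypF(2)[OF likelihood_parameters_pos(2) _ _ likelihood_series_summable(2)
      likelihood_parameters_pos(3), of j]
  by (simp add: moment_integral_split)

lemma moment_integral_odd:
  "(LINT \<rho>:{-1<..<1}|lborel. \<rho> ^ (2 * j + 1) * (hlik \<gamma> \<delta> n r \<rho> * prior_alpha \<alpha> \<rho>))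
    = 2 * r * Wgd \<gamma> \<delta> n * (Beta (real j + 3/2) (\<alpha> + (real n - \<gamma> - \<delta> - 1) / 2)
      * hypF [real j + 3/2, (real n - \<gamma>) / 2, (real n - \<delta>) / 2]
          [3/2, real j + 3/2 + (\<alpha> + (real n - \<gamma> - \<delta> - 1) / 2)] (r\<^sup>2))
      / Beta (1/2) \<alpha>"
  using set_integral_odd_moment_hypF(2)[OF likelihood_parameters_pos(1) _ _ likelihood_series_summable(1)
      likelihood_parameters_pos(3), of j]
    set_integral_even_moment_hypF(2)[OF likelihood_parameters_pos(2) _ _ likelihood_series_summable(2)
      likelihood_parameters_pos(3), of "Suc j"]
  by (simp only: moment_integral_split) (simp add: add_ac)

lemma pnorm_closed_form:
  "pnorm \<alpha> \<gamma> \<delta> n r =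
     Beta (1/2) (\<alpha> + (real n - \<gamma> - \<delta> - 1) / 2) *
     hypF [(real n - \<gamma> - 1) / 2, (real n - \<delta> - 1) / 2] [\<alpha> + (real n - \<gamma> - \<delta>) / 2] (r\<^sup>2)
     / Beta (1/2) \<alpha>"
proof -
  have "pnorm \<alpha> \<gamma> \<delta> n r
      = (LINT \<rho>:{-1<..<1}|lborel. \<rho> ^ (2 * 0) * (hlik \<gamma> \<delta> n r \<rho> * prior_alpha \<alpha> \<rho>))"
    by (simp add: pnorm_def)
  also have "\<dots> = Beta (1/2) (\<alpha> + (real n - \<gamma> - \<delta> - 1) / 2)
      * hypF [1/2, (real n - \<gamma> - 1) / 2, (real n - \<delta> - 1) / 2] [1/2, \<alpha> + (real n - \<gamma> - \<delta>) / 2] (r\<^sup>2)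
      / Beta (1/2) \<alpha>"
    unfolding moment_integral_even by (simp add: field_simps)
  also have "hypF [1/2, (real n - \<gamma> - 1) / 2, (real n - \<delta> - 1) / 2] [1/2, \<alpha> + (real n - \<gamma> - \<delta>) / 2] (r\<^sup>2)
      = hypF [(real n - \<gamma> - 1) / 2, (real n - \<delta> - 1) / 2] [\<alpha> + (real n - \<gamma> - \<delta>) / 2] (r\<^sup>2)"
    by (intro hypF_cancel) (simp add: pochhammer_pos less_imp_neq[symmetric])
  finally show ?thesis .
qed

lemma post_moment_even:
  assumes "even k"
  shows "post_moment \<alpha> \<gamma> \<delta> n r k =
     Beta (1/2 + real k / 2) (\<alpha> + (real n - \<gamma> - \<delta> - 1) / 2) *
     hypF [(real k + 1) / 2, (real n - \<gamma> - 1) / 2, (real n - \<delta> - 1) / 2]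
          [1/2, (real k + 2 * \<alpha> + real n - \<gamma> - \<delta>) / 2] (r\<^sup>2)
     / (Beta (1/2) (\<alpha> + (real n - \<gamma> - \<delta> - 1) / 2) *
        hypF [(real n - \<gamma> - 1) / 2, (real n - \<delta> - 1) / 2]
             [(2 * \<alpha> + real n - \<gamma> - \<delta>) / 2] (r\<^sup>2))"
proof -
  obtain j where k: "k = 2 * j"
    using assms by (auto elim: evenE)
  have parameters: "1/2 + real k / 2 = real j + 1/2" "(real k + 1) / 2 = real j + 1/2"
    "(real k + 2 * \<alpha> + real n - \<gamma> - \<delta>) / 2 = real j + 1/2 + (\<alpha> + (real n - \<gamma> - \<delta> - 1) / 2)"
    "(2 * \<alpha> + real n - \<gamma> - \<delta>) / 2 = \<alpha> + (real n - \<gamma> - \<delta>) / 2"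
    by (simp_all add: k field_simps)
  have "Beta (1/2) \<alpha> \<noteq> 0"
    using Beta_real_pos[of "1/2" \<alpha>] \<alpha> by simp
  then show ?thesis
    unfolding parameters post_moment_eq pnorm_closed_form
    unfolding k moment_integral_even by simp
qed

lemma post_moment_odd:
  assumes "odd k"
  shows "post_moment \<alpha> \<gamma> \<delta> n r k =
     2 * r * Wgd \<gamma> \<delta> n *
     (Beta (1/2 + (real k + 1) / 2) (\<alpha> + (real n - \<gamma> - \<delta> - 1) / 2) *
      hypF [(real k + 2) / 2, (real n - \<gamma>) / 2, (real n - \<delta>) / 2]
           [3/2, (real k + 2 * \<alpha> + real n - \<gamma> - \<delta> + 1) / 2] (r\<^sup>2)
      / (Beta (1/2) (\<alpha> + (real n - \<gamma> - \<delta> - 1) / 2) *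
         hypF [(real n - \<gamma> - 1) / 2, (real n - \<delta> - 1) / 2]
              [(2 * \<alpha> + real n - \<gamma> - \<delta>) / 2] (r\<^sup>2)))"
proof -
  obtain j where k: "k = 2 * j + 1"
    using assms by (auto elim: oddE)
  have parameters: "1/2 + (real k + 1) / 2 = real j + 3/2" "(real k + 2) / 2 = real j + 3/2"
    "(real k + 2 * \<alpha> + real n - \<gamma> - \<delta> + 1) / 2 = real j + 3/2 + (\<alpha> + (real n - \<gamma> - \<delta> - 1) / 2)"
    "(2 * \<alpha> + real n - \<gamma> - \<delta>) / 2 = \<alpha> + (real n - \<gamma> - \<delta>) / 2"
    by (simp_all add: k field_simps)
  have "Beta (1/2) \<alpha> \<noteq> 0"
    using Beta_real_pos[of "1/2" \<alpha>] \<alpha> by simp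
  then show ?thesis
    unfolding parameters post_moment_eq pnorm_closed_form
    unfolding k moment_integral_odd by simp
qed
end

theorem mainTheorem3:
  fixes n :: nat and r \<alpha> \<gamma> \<delta> :: real
  assumes "n > 0" and "\<bar>r\<bar> < 1" and "\<alpha> > 0"
    and "real n > \<gamma> + 1" and "real n > \<delta> + 1" and "real n > \<gamma> + \<delta> - 2 * \<alpha> + 1"
  shows
    "(pnorm \<alpha> \<gamma> \<delta> n r =
       Beta (1/2) (\<alpha> + (real n - \<gamma> - \<delta> - 1) / 2) *
       hypF [(real n - \<gamma> - 1) / 2, (real n - \<delta> - 1) / 2] [\<alpha> + (real n - \<gamma> - \<delta>) / 2] (r\<^sup>2)
       / Beta (1/2) \<alpha>)
   \<and> (\<forall>\<rho>\<in>{-1<..<1}. posterior \<alpha> \<gamma> \<delta> n r \<rho> =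
       (1 - \<rho>\<^sup>2) powr ((2 * \<alpha> + real n - \<gamma> - \<delta> - 3) / 2) /
       (pnorm \<alpha> \<gamma> \<delta> n r * Beta (1/2) \<alpha>) *
       (hypF [(real n - \<gamma> - 1) / 2, (real n - \<delta> - 1) / 2] [1/2] (r\<^sup>2 * \<rho>\<^sup>2)
        + 2 * r * \<rho> * Wgd \<gamma> \<delta> n *
          hypF [(real n - \<gamma>) / 2, (real n - \<delta>) / 2] [3/2] (r\<^sup>2 * \<rho>\<^sup>2)))
   \<and> (\<forall>k::nat. even k \<longrightarrow> post_moment \<alpha> \<gamma> \<delta> n r k =
       Beta (1/2 + real k / 2) (\<alpha> + (real n - \<gamma> - \<delta> - 1) / 2) *
       hypF [(real k + 1) / 2, (real n - \<gamma> - 1) / 2, (real n - \<delta> - 1) / 2]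
            [1/2, (real k + 2 * \<alpha> + real n - \<gamma> - \<delta>) / 2] (r\<^sup>2)
       / (Beta (1/2) (\<alpha> + (real n - \<gamma> - \<delta> - 1) / 2) *
          hypF [(real n - \<gamma> - 1) / 2, (real n - \<delta> - 1) / 2]
               [(2 * \<alpha> + real n - \<gamma> - \<delta>) / 2] (r\<^sup>2)))
   \<and> (\<forall>k::nat. odd k \<longrightarrow> post_moment \<alpha> \<gamma> \<delta> n r k =
       2 * r * Wgd \<gamma> \<delta> n *
       (Beta (1/2 + (real k + 1) / 2) (\<alpha> + (real n - \<gamma> - \<delta> - 1) / 2) *
        hypF [(real k + 2) / 2, (real n - \<gamma>) / 2, (real n - \<delta>) / 2]
             [3/2, (real k + 2 * \<alpha> + real n - \<gamma> - \<delta> + 1) / 2] (r\<^sup>2)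
        / (Beta (1/2) (\<alpha> + (real n - \<gamma> - \<delta> - 1) / 2) *
           hypF [(real n - \<gamma> - 1) / 2, (real n - \<delta> - 1) / 2]
                [(2 * \<alpha> + real n - \<gamma> - \<delta>) / 2] (r\<^sup>2))))"
  using pnorm_closed_form[OF assms(2-6)] posterior_closed_form
    post_moment_even[OF assms(2-6)] post_moment_odd[OF assms(2-6)]
  by blast

end
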